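(* Let $Z$ be a del Pezzo surface. The orthogonal group $O(Z)$ is generated by the finite Weyl group $W(Z)$ and the subgroup $\mathrm{Pic}^0(Z)$ (acting on $K(Z)$ by tensor product); moreover $W(Z)\cap\mathrm{Pic}^0(Z)$ is trivial and $\mathrm{Pic}^0(Z)$ is normal in $O(Z)$, so that $O(Z)=W(Z)\ltimes\mathrm{Pic}^0(Z)$.
   Context: $Z$ is a smooth projective connected surface over $\mathbb{C}$ with ample $\omega_Z^{-1}$; $K_Z=c_1(\omega_Z)\in NS(Z)$. $K(Z)$ is the Grothendieck group of the bounded derived category of coherent sheaves; $r$ rank, $d(E)=c_1(E)\cdot(-K_Z)$, $\chi(E)$ Euler characteristic, $\chi(E,F)=\sum_i(-1)^i\dim\mathrm{Hom}^i(E,F)$ the Euler form. There is an isomorphism $K(Z)\cong\mathbb{Z}[\mathcal{O}_Z]\oplus NS(Z)\oplus\mathbb{Z}\delta$, $[E]\mapsto(r(E),c_1(E),\chi(E)-r(E))$, where $\delta$ is the class of a skyscraper sheaf of a point; through it $K_Z^\perp=\{\alpha\in NS(Z):\alpha\cdot K_Z=0\}$ is viewed inside $K(Z)$. $O(Z)$ is the group of automorphisms of $K(Z)$ preserving $\chi(-,-)$, $r$ and $d$. A finite root is $\alpha\in K_Z^\perp$ with $\chi(\alpha,\alpha)=2$; $W(Z)$ is the group generated by the reflections $\beta\mapsto\beta-\chi(\beta,\alpha)\alpha$ for finite roots $\alpha$. $\mathrm{Pic}^0(Z)=\{L\in\mathrm{Pic}(Z):c_1(L)\cdot K_Z=0\}$,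 acting on $K(Z)$ by $[E]\mapsto[E\otimes L]$, which lies in $O(Z)$. *)

theory Defs
  imports Main "HOL-Library.Product_Plus" "HOL-Library.Function_Algebras"
begin

text \<open>NS(Z) = Pic(Z) is modelled as
  'n \<Rightarrow> int for a finite index type 'n, with intersection form Q and canonical class K.
  The classification of del Pezzo surfaces says (NS(Z), intersection form, K_Z) is
  isometric to that of P^2 blown up in n \<le> 8 points (basis h, e_1..e_n, K = -3h + sum e_i)
  or of P^1 x P^1 (hyperbolic plane, K = (-2,-2)).\<close>

definition dP_NS :: "(('n::finite \<Rightarrow> int) \<Rightarrow> ('n \<Rightarrow> int) \<Rightarrow> int) \<Rightarrow> ('n \<Rightarrow> int) \<Rightarrow> bool" where
  "dP_NS Q K \<longleftrightarrow> (\<exists>e :: nat \<Rightarrow> 'n. bij_betw e {..<card (UNIV :: 'n set)} UNIV \<and>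
     ((card (UNIV :: 'n set) \<le> 9 \<and>
       (\<forall>x y. Q x y = x (e 0) * y (e 0) - (\<Sum>i\<in>{1..<card (UNIV :: 'n set)}. x (e i) * y (e i))) \<and>
       K (e 0) = -3 \<and> (\<forall>i\<in>{1..<card (UNIV :: 'n set)}. K (e i) = 1))
    \<or> (card (UNIV :: 'n set) = 2 \<and>
       (\<forall>x y. Q x y = x (e 0) * y (e 1) + x (e 1) * y (e 0)) \<and>
       K (e 0) = -2 \<and> K (e 1) = -2)))"

text \<open>K(Z) = Z[O_Z] + NS(Z) + Z delta, a class being (r, c_1, chi - r).\<close>
type_synonym 'n Kcls = "int \<times> ('n \<Rightarrow> int) \<times> int"

definition rk :: "'n Kcls \<Rightarrow> int" where "rk x = fst x"

definition degK :: "(('n \<Rightarrow> int) \<Rightarrow> ('n \<Rightarrow> int) \<Rightarrow> int) \<Rightarrow> ('n \<Rightarrow> int) \<Rightarrow> 'n Kcls \<Rightarrow> int" where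
  "degK Q K x = - Q (fst (snd x)) K"

text \<open>Euler form (Riemann-Roch): for E=(r1,c1,s1), F=(r2,c2,s2),
  chi(E,F) = r1 r2 + r1 s2 + r2 s1 - c1.c2 + r2 (c1.K).\<close>
definition euler :: "(('n \<Rightarrow> int) \<Rightarrow> ('n \<Rightarrow> int) \<Rightarrow> int) \<Rightarrow> ('n \<Rightarrow> int) \<Rightarrow> 'n Kcls \<Rightarrow> 'n Kcls \<Rightarrow> int" where
  "euler Q K x y = (case x of (r1, c1, s1) \<Rightarrow> case y of (r2, c2, s2) \<Rightarrow>
      r1 * r2 + r1 * s2 + r2 * s1 - Q c1 c2 + r2 * Q c1 K)"

definition additive_map :: "('a::plus \<Rightarrow> 'a) \<Rightarrow> bool" where
  "additive_map f \<longleftrightarrow> (\<forall>x y. f (x + y) = f x + f y)"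

definition Ogroup :: "(('n \<Rightarrow> int) \<Rightarrow> ('n \<Rightarrow> int) \<Rightarrow> int) \<Rightarrow> ('n \<Rightarrow> int) \<Rightarrow> ('n Kcls \<Rightarrow> 'n Kcls) set" where
  "Ogroup Q K = {f. bij f \<and> additive_map f \<and> (\<forall>x y. euler Q K (f x) (f y) = euler Q K x y)
      \<and> (\<forall>x. rk (f x) = rk x) \<and> (\<forall>x. degK Q K (f x) = degK Q K x)}"

definition ns_cls :: "('n \<Rightarrow> int) \<Rightarrow> 'n Kcls" where "ns_cls a = (0, a, 0)"

definition finite_roots :: "(('n \<Rightarrow> int) \<Rightarrow> ('n \<Rightarrow> int) \<Rightarrow> int) \<Rightarrow> ('n \<Rightarrow> int) \<Rightarrow> 'n Kcls set" where
  "finite_roots Q K = {ns_cls a | a. Q a K = 0 \<and> euler Q K (ns_cls a) (ns_cls a) = 2}"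

definition refl :: "(('n \<Rightarrow> int) \<Rightarrow> ('n \<Rightarrow> int) \<Rightarrow> int) \<Rightarrow> ('n \<Rightarrow> int) \<Rightarrow> 'n Kcls \<Rightarrow> 'n Kcls \<Rightarrow> 'n Kcls" where
  "refl Q K \<alpha> \<beta> = \<beta> - (let k = euler Q K \<beta> \<alpha> in (k * fst \<alpha>, (\<lambda>i. k * fst (snd \<alpha>) i), k * snd (snd \<alpha>)))"

inductive_set gen_group :: "('a \<Rightarrow> 'a) set \<Rightarrow> ('a \<Rightarrow> 'a) set" for S where
  gen_id: "id \<in> gen_group S"
| gen_mult: "f \<in> S \<Longrightarrow> g \<in> gen_group S \<Longrightarrow> f \<circ> g \<in> gen_group S"
| gen_inv: "f \<in> S \<Longrightarrow> g \<in> gen_group S \<Longrightarrow> inv f \<circ> g \<in> gen_group S"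

definition Weyl :: "(('n \<Rightarrow> int) \<Rightarrow> ('n \<Rightarrow> int) \<Rightarrow> int) \<Rightarrow> ('n \<Rightarrow> int) \<Rightarrow> ('n Kcls \<Rightarrow> 'n Kcls) set" where
  "Weyl Q K = gen_group {refl Q K \<alpha> | \<alpha>. \<alpha> \<in> finite_roots Q K}"

text \<open>Tensoring by a line bundle L with c_1(L) = l:
  [E (x) L] = (r, c + r l, s + c.l + r (l.l - l.K)/2)  (Riemann-Roch).\<close>
definition twist :: "(('n \<Rightarrow> int) \<Rightarrow> ('n \<Rightarrow> int) \<Rightarrow> int) \<Rightarrow> ('n \<Rightarrow> int) \<Rightarrow> ('n \<Rightarrow> int) \<Rightarrow> 'n Kcls \<Rightarrow> 'n Kcls" where
  "twist Q K l x = (case x of (r, c, s) \<Rightarrow>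
     (r, (\<lambda>i. c i + r * l i), s + Q c l + r * ((Q l l - Q l K) div 2)))"

definition Pic0 :: "(('n \<Rightarrow> int) \<Rightarrow> ('n \<Rightarrow> int) \<Rightarrow> int) \<Rightarrow> ('n \<Rightarrow> int) \<Rightarrow> ('n Kcls \<Rightarrow> 'n Kcls) set" where
  "Pic0 Q K = {twist Q K l | l. Q l K = 0}"

end

(* An element f of O(Z) fixes the point class delta, because chi(-, delta) is the rank.
   Writing f [O_Z] = (1, l, t), the class l is orthogonal to K, and f is the twist by l composed
   with the action h of f on c_1 of the classes (0, c, 0), an isometry of NS(Z) fixing K.
   Twists by K-orthogonal classes form an abelian group with h o twist_l o h^-1 = twist_(h l),
   whence normality; the Weyl group fixes [O_Z] while twist_l moves it unless l = 0.

   So it remains to write every isometry g of NS(Z) fixing K as a product of reflections in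
   (-2)-classes orthogonal to K.  On P^1 x P^1, g fixes or swaps the two rulings, and the swap
   is such a reflection.  On P^2 blown up in n <= 8 points let g(h) = d h - sum b_i e_i.  The
   b_i are nonnegative, since (-1)-classes have nonnegative degree when n <= 8; if d > 1,
   Noether's inequality gives b_i + b_j + b_k > d, so the reflection in h - e_i - e_j - e_k
   lowers d.  When d = 1, g fixes h and permutes the e_i, and reflections in e_i - e_j sort
   them. *)

theory Submission
  imports Defs "HOL-Analysis.Convex"
begin

section \<open>Generated groups and the group O(Z)\<close>

lemma gen_group_generator: "f \<in> S \<Longrightarrow> f \<in> gen_group S"
  using gen_group.gen_mult[OF _ gen_group.gen_id] by fastforce

lemma gen_group_comp: "f \<in> gen_group S \<Longrightarrow> g \<in> gen_group S \<Longrightarrow> f \<circ> g \<in> gen_group S"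
  by (induction f rule: gen_group.induct) (auto simp: comp_assoc intro: gen_group.intros)

lemma gen_group_least:
  assumes "S \<subseteq> G" "id \<in> G"
    and "\<And>f g. f \<in> G \<Longrightarrow> g \<in> G \<Longrightarrow> f \<circ> g \<in> G" "\<And>f. f \<in> G \<Longrightarrow> inv f \<in> G"
  shows "gen_group S \<subseteq> G"
proof
  show "f \<in> G" if "f \<in> gen_group S" for f
    using that by induction (use assms in blast)+
qed

lemma id_in_Ogroup: "id \<in> Ogroup Q K"
  by (simp add: Ogroup_def additive_map_def)

lemma Ogroup_comp: "f \<in> Ogroup Q K \<Longrightarrow> g \<in> Ogroup Q K \<Longrightarrow> f \<circ> g \<in> Ogroup Q K"
  unfolding Ogroup_def additive_map_def by (simp add: bij_comp del: split_paired_All)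

lemma Ogroup_inv:
  assumes "f \<in> Ogroup Q K"
  shows "inv f \<in> Ogroup Q K"
proof -
  have "bij f" and additive: "additive_map f" and euler: "\<And>x y. euler Q K (f x) (f y) = euler Q K x y"
    and rk: "\<And>x. rk (f x) = rk x" and degK: "\<And>x. degK Q K (f x) = degK Q K x"
    using assms by (auto simp: Ogroup_def)
  have f_inv: "f (inv f x) = x" for x
    using \<open>bij f\<close> by (simp add: bij_is_surj surj_f_inv_f)
  have "additive_map (inv f)"
    unfolding additive_map_def
  proof (intro allI)
    fix x y
    have "f (inv f x + inv f y) = x + y"
      using additive f_inv unfolding additive_map_def by metis
    then show "inv f (x + y) = inv f x + inv f y"
      using \<open>bij f\<close> by (metis bij_is_inj inv_f_f)
  qed
  moreover have "euler Q K (inv f x) (inv f y) = euler Q K x y" for x y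
    using euler[of "inv f x" "inv f y"] by (simp add: f_inv)
  moreover have "rk (inv f x) = rk x" "degK Q K (inv f x) = degK Q K x" for x
    using rk[of "inv f x"] degK[of "inv f x"] by (simp_all add: f_inv)
  ultimately show ?thesis
    using \<open>bij f\<close> by (simp add: Ogroup_def bij_imp_bij_inv)
qed

lemma gen_group_subset_Ogroup: "S \<subseteq> Ogroup Q K \<Longrightarrow> gen_group S \<subseteq> Ogroup Q K"
  by (rule gen_group_least) (auto intro: id_in_Ogroup Ogroup_comp Ogroup_inv)

definition kscale :: "int \<Rightarrow> 'n Kcls \<Rightarrow> 'n Kcls" where
  "kscale m x = (m * fst x, (\<lambda>k. m * fst (snd x) k), m * snd (snd x))"

lemma additive_map_diff:
  assumes "additive_map f"
  shows "f (x - y) = f x - f (y :: 'n Kcls)"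
  using assms unfolding additive_map_def by (metis add_diff_cancel diff_add_cancel eq_diff_eq)

lemma additive_map_kscale:
  assumes "additive_map f"
  shows "f (kscale m x) = kscale m (f x)"
proof (induction m rule: int_induct[where k = 0])
  case base
  have "f 0 = 0"
    using additive_map_diff[OF assms, of 0 0] by simp
  then show ?case
    by (simp add: kscale_def zero_prod_def zero_fun_def)
next
  case (step1 m)
  have "kscale (m + 1) y = kscale m y + y" for y :: "'n Kcls"
    by (cases y) (simp add: kscale_def algebra_simps plus_fun_def)
  then show ?case
    using step1 assms unfolding additive_map_def by metis
next
  case (step2 m)
  have "kscale (m - 1) y = kscale m y - y" for y :: "'n Kcls"
    by (cases y) (simp add: kscale_def algebra_simps fun_diff_def)
  then show ?case
    using step2 additive_map_diff[OF assms] by metis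
qed

lemma additive_map_apply:
  assumes "additive_map f"
  shows "f (r, c, s) = kscale r (f (1, 0, 0)) + f (0, c, 0) + kscale s (f (0, 0, 1))"
proof -
  have "(r, c, s) = kscale r (1, 0, 0) + (0, c, 0) + kscale s (0, 0, 1)"
    by (simp add: kscale_def zero_fun_def)
  then show ?thesis
    using assms unfolding additive_map_def by (metis additive_map_kscale[OF assms])
qed

section \<open>Lattices with a characteristic canonical class\<close>

type_synonym 'n ns_form = "('n \<Rightarrow> int) \<Rightarrow> ('n \<Rightarrow> int) \<Rightarrow> int"
type_synonym 'n ns_map = "('n \<Rightarrow> int) \<Rightarrow> 'n \<Rightarrow> int"

definition basis_vec :: "'n \<Rightarrow> 'n \<Rightarrow> int" where
  "basis_vec k = (\<lambda>j. if j = k then 1 else 0)"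

definition isometry :: "'n ns_form \<Rightarrow> 'n ns_map \<Rightarrow> bool" where
  "isometry Q g \<longleftrightarrow> (\<forall>x y. Q (g x) (g y) = Q x y)"

definition K_isometry :: "'n ns_form \<Rightarrow> ('n \<Rightarrow> int) \<Rightarrow> 'n ns_map \<Rightarrow> bool" where
  "K_isometry Q K g \<longleftrightarrow> isometry Q g \<and> surj g \<and> g K = K"

definition ns_reflection :: "'n ns_form \<Rightarrow> ('n \<Rightarrow> int) \<Rightarrow> 'n ns_map" where
  "ns_reflection Q a x = (\<lambda>k. x k + Q x a * a k)"

definition lift_ns :: "'n ns_map \<Rightarrow> 'n Kcls \<Rightarrow> 'n Kcls" where
  "lift_ns g x = (fst x, g (fst (snd x)), snd (snd x))"

lemma twist_apply [simp]:
  "twist Q K l (r, c, s) = (r, (\<lambda>i. c i + r * l i), s + Q c l + r * ((Q l l - Q l K) div 2))"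
  by (simp add: twist_def)

lemma euler_apply [simp]:
  "euler Q K (r1, c1, s1) (r2, c2, s2) = r1 * r2 + r1 * s2 + r2 * s1 - Q c1 c2 + r2 * Q c1 K"
  by (simp add: euler_def)

lemma lift_ns_apply [simp]: "lift_ns g (r, c, s) = (r, g c, s)"
  by (simp add: lift_ns_def)

lemma lift_ns_id [simp]: "lift_ns id = id"
  by (simp add: lift_ns_def fun_eq_iff)

lemma lift_ns_comp: "lift_ns (g \<circ> h) = lift_ns g \<circ> lift_ns h"
  by (simp add: lift_ns_def fun_eq_iff)

lemma refl_ns_cls: "refl Q K (ns_cls a) = lift_ns (ns_reflection Q a)"
proof
  fix x
  show "refl Q K (ns_cls a) x = lift_ns (ns_reflection Q a) x"
    by (cases x) (simp add: refl_def ns_cls_def ns_reflection_def Let_def fun_diff_def)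
qed

definition ns_part :: "('n Kcls \<Rightarrow> 'n Kcls) \<Rightarrow> 'n ns_map" where
  "ns_part f c = fst (snd (f (0, c, 0)))"

locale canonical_lattice =
  fixes Q :: "'n ns_form" and K :: "'n \<Rightarrow> int"
  assumes Q_sym: "Q x y = Q y x"
    and Q_linear: "Q (\<lambda>k. p * x k + q * y k) z = p * Q x z + q * Q y z"
    and Q_nondegenerate: "(\<And>k. Q u (basis_vec k) = Q v (basis_vec k)) \<Longrightarrow> u = v"
    and K_characteristic: "even (Q l l - Q l K)" \<comment> \<open>Wu's formula; it makes the division by 2 in twist exact\<close>
begin

lemma Q_add_left: "Q (\<lambda>k. x k + r * y k) z = Q x z + r * Q y z"
  using Q_linear[of 1 x r y z] by simp

lemma Q_add_right: "Q z (\<lambda>k. x k + r * y k) = Q z x + r * Q z y"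
  using Q_add_left Q_sym by metis

lemma Q_plus_left: "Q (x + y) z = Q x z + Q y z"
  using Q_add_left[of x 1 y z] by (simp add: plus_fun_def)

lemma Q_plus_right: "Q z (x + y) = Q z x + Q z y"
  using Q_plus_left Q_sym by metis

lemma Q_diff_left: "Q (x - y) z = Q x z - Q y z"
  using Q_add_left[of x "-1" y z] by (simp add: fun_diff_def)

lemma Q_uminus_left: "Q (- x) z = - Q x z"
  using Q_linear[of "-1" x 0 x z] by (simp add: fun_Compl_def)

lemma Q_zero_left [simp]: "Q 0 z = 0"
  using Q_linear[of 0 z 0 z z] by (simp add: zero_fun_def)

lemma Q_zero_right [simp]: "Q z 0 = 0"
  using Q_zero_left Q_sym by metis

lemma isometry_inj:
  assumes "isometry Q g"
  shows "inj g"
proof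
  fix x y
  assume "g x = g y"
  then have "Q x (basis_vec k) = Q y (basis_vec k)" for k
    using assms unfolding isometry_def by metis
  then show "x = y"
    by (rule Q_nondegenerate)
qed

lemma isometry_add:
  assumes "isometry Q g" "surj g"
  shows "g (\<lambda>k. x k + r * y k) = (\<lambda>k. g x k + r * g y k)"
proof (rule Q_nondegenerate)
  fix k
  obtain w where w: "basis_vec k = g w"
    using \<open>surj g\<close> by (metis surjD)
  have "Q (g (\<lambda>k. x k + r * y k)) (g w) = Q x w + r * Q y w"
    using \<open>isometry Q g\<close> Q_add_left unfolding isometry_def by simp
  also have "\<dots> = Q (\<lambda>k. g x k + r * g y k) (g w)"
    using \<open>isometry Q g\<close> Q_add_left unfolding isometry_def by simp
  finally show "Q (g (\<lambda>k. x k + r * y k)) (basis_vec k) = Q (\<lambda>k. g x k + r * g y k) (basis_vec k)"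
    unfolding w .
qed

lemma isometry_plus: "isometry Q g \<Longrightarrow> surj g \<Longrightarrow> g (x + y) = g x + g y"
  using isometry_add[of g x 1 y] by (simp add: plus_fun_def)

lemma isometry_eq_id:
  assumes "isometry Q g" "\<And>k. g (basis_vec k) = basis_vec k"
  shows "g = id"
proof
  fix x
  have "Q (g x) (basis_vec k) = Q x (basis_vec k)" for k
    using assms unfolding isometry_def by metis
  then show "g x = id x"
    by (simp add: Q_nondegenerate)
qed

lemma isometry_fixes_K:
  assumes "isometry Q g" "surj g" "\<And>c. Q (g c) K = Q c K"
  shows "g K = K"
proof (rule Q_nondegenerate)
  fix k
  obtain w where w: "basis_vec k = g w"
    using \<open>surj g\<close> by (metis surjD)
  have "Q (g K) (g w) = Q w K"
    using assms(1) Q_sym unfolding isometry_def by simp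
  also have "\<dots> = Q K (g w)"
    using assms(3) Q_sym by simp
  finally show "Q (g K) (basis_vec k) = Q K (basis_vec k)"
    unfolding w .
qed

lemma K_isometry_comp: "K_isometry Q K g \<Longrightarrow> K_isometry Q K h \<Longrightarrow> K_isometry Q K (g \<circ> h)"
  unfolding K_isometry_def isometry_def using comp_surj[of h g] by simp

lemma ns_reflection_isometry:
  assumes "Q a a = -2"
  shows "isometry Q (ns_reflection Q a)"
  unfolding isometry_def
proof (intro allI)
  fix x y
  have "Q (ns_reflection Q a x) (ns_reflection Q a y) = Q x y + Q y a * Q x a + Q x a * (Q a y + Q y a * Q a a)"
    unfolding ns_reflection_def Q_add_left Q_add_right ..
  then show "Q (ns_reflection Q a x) (ns_reflection Q a y) = Q x y"
    using assms Q_sym[of a y] by (simp add: algebra_simps)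
qed

lemma ns_reflection_involution:
  assumes "Q a a = -2"
  shows "ns_reflection Q a (ns_reflection Q a x) = x"
  using assms unfolding ns_reflection_def Q_add_left by simp

lemma ns_reflection_K_isometry:
  assumes "Q a a = -2" "Q a K = 0"
  shows "K_isometry Q K (ns_reflection Q a)"
  unfolding K_isometry_def
  using assms ns_reflection_isometry ns_reflection_involution[OF assms(1)] Q_sym[of K a]
    surjI[of "ns_reflection Q a" "ns_reflection Q a"]
  by (auto simp: ns_reflection_def)

lemma lift_ns_in_Weyl_if_reflected:
  assumes "Q a a = -2" "Q a K = 0" "lift_ns (ns_reflection Q a \<circ> h) \<in> Weyl Q K"
  shows "lift_ns h \<in> Weyl Q K"
proof -
  have "ns_cls a \<in> finite_roots Q K"
    using assms(1,2) unfolding finite_roots_def ns_cls_def by auto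
  then have "refl Q K (ns_cls a) \<circ> lift_ns (ns_reflection Q a \<circ> h) \<in> Weyl Q K"
    using assms(3) unfolding Weyl_def by (blast intro: gen_group.gen_mult)
  moreover have "lift_ns h = lift_ns (ns_reflection Q a) \<circ> lift_ns (ns_reflection Q a \<circ> h)"
    using ns_reflection_involution[OF assms(1)] by (simp add: fun_eq_iff lift_ns_def)
  ultimately show ?thesis
    unfolding refl_ns_cls by simp
qed

lemma even_norm: "Q l K = 0 \<Longrightarrow> even (Q l l)"
  using K_characteristic[of l] by simp

lemma twist_zero: "twist Q K 0 = id"
  by (auto simp: fun_eq_iff zero_fun_def[symmetric])

lemma twist_comp:
  assumes "Q l K = 0" "Q m K = 0"
  shows "twist Q K l \<circ> twist Q K m = twist Q K (l + m)"
proof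
  fix x :: "'n Kcls"
  obtain r c s where x: "x = (r, c, s)"
    by (cases x)
  have "Q (l + m) (l + m) = Q l l + 2 * Q l m + Q m m"
    unfolding Q_plus_left Q_plus_right using Q_sym[of m l] by simp
  then have "Q (l + m) (l + m) div 2 = Q l l div 2 + Q m m div 2 + Q l m"
    using even_norm[OF assms(1)] even_norm[OF assms(2)] by (auto elim!: evenE)
  moreover have "Q (\<lambda>i. c i + r * m i) l = Q c l + r * Q l m"
    using Q_add_left Q_sym[of m l] by simp
  ultimately show "(twist Q K l \<circ> twist Q K m) x = twist Q K (l + m) x"
    using assms by (simp add: x Q_plus_left Q_plus_right algebra_simps)
qed

lemma twist_in_Ogroup:
  assumes "Q l K = 0"
  shows "twist Q K l \<in> Ogroup Q K"
proof -
  have "Q (- l) K = 0"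
    using assms by (simp add: Q_uminus_left)
  then have "bij (twist Q K l)"
    using assms twist_comp[of l "- l"] twist_comp[of "- l" l] by (intro o_bij) (simp_all add: twist_zero)
  moreover have "additive_map (twist Q K l)"
    unfolding additive_map_def by (auto simp: Q_plus_left algebra_simps)
  moreover have "euler Q K (twist Q K l x) (twist Q K l y) = euler Q K x y" for x y
  proof -
    obtain r1 c1 s1 r2 c2 s2 where xy: "x = (r1, c1, s1)" "y = (r2, c2, s2)"
      by (cases x, cases y)
    have "Q (\<lambda>i. c1 i + r1 * l i) (\<lambda>i. c2 i + r2 * l i) = Q c1 c2 + r2 * Q c1 l + r1 * Q c2 l + r1 * r2 * Q l l"
      unfolding Q_add_left Q_add_right using Q_sym[of l c2] by (simp add: algebra_simps)
    moreover have "Q (\<lambda>i. c1 i + r1 * l i) K = Q c1 K"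
      using assms by (simp add: Q_add_left)
    moreover have "2 * (Q l l div 2) = Q l l"
      using even_norm[OF assms] by simp
    ultimately show ?thesis
      unfolding xy using assms by (simp add: algebra_simps)
  qed
  moreover have "rk (twist Q K l x) = rk x" "degK Q K (twist Q K l x) = degK Q K x" for x
    using assms by (cases x, simp add: rk_def degK_def Q_add_left)+
  ultimately show ?thesis
    unfolding Ogroup_def by blast
qed

lemma lift_ns_in_Ogroup:
  assumes "K_isometry Q K h"
  shows "lift_ns h \<in> Ogroup Q K"
proof -
  have iso: "Q (h x) (h y) = Q x y" and "surj h" and "h K = K" for x y
    using assms by (auto simp: K_isometry_def isometry_def)
  then have "bij h"
    using isometry_inj assms unfolding K_isometry_def by (simp add: bij_def)
  then have "lift_ns (inv h) \<circ> lift_ns h = id" "lift_ns h \<circ> lift_ns (inv h) = id"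
    by (simp_all add: lift_ns_comp[symmetric] bij_is_inj bij_is_surj surj_iff[THEN iffD1] inj_iff[THEN iffD1])
  then have "bij (lift_ns h)"
    by (rule o_bij)
  moreover have "h (x + y) = h x + h y" for x y
    using assms isometry_plus unfolding K_isometry_def by blast
  then have "additive_map (lift_ns h)"
    unfolding additive_map_def lift_ns_def by simp
  moreover have "Q (h c) K = Q c K" for c
    using iso[of c K] \<open>h K = K\<close> by simp
  then have "euler Q K (lift_ns h x) (lift_ns h y) = euler Q K x y"
    and "degK Q K (lift_ns h x) = degK Q K x" for x y
    by (cases x, cases y, simp add: iso, simp add: degK_def lift_ns_def)+
  moreover have "rk (lift_ns h x) = rk x" for x
    by (simp add: rk_def lift_ns_def)
  ultimately show ?thesis
    unfolding Ogroup_def by blast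
qed

lemma Pic0_subset_Ogroup: "Pic0 Q K \<subseteq> Ogroup Q K"
  unfolding Pic0_def using twist_in_Ogroup by blast

lemma finite_rootE:
  assumes "\<alpha> \<in> finite_roots Q K"
  obtains a where "\<alpha> = ns_cls a" "Q a a = -2" "Q a K = 0"
  using assms unfolding finite_roots_def ns_cls_def by auto

lemma Weyl_subset_stabilizer: "Weyl Q K \<subseteq> {f \<in> Ogroup Q K. f (1, 0, 0) = (1, 0, 0)}"
  unfolding Weyl_def
proof (rule gen_group_least)
  show "{refl Q K \<alpha> |\<alpha>. \<alpha> \<in> finite_roots Q K} \<subseteq> {f \<in> Ogroup Q K. f (1, 0, 0) = (1, 0, 0)}"
  proof clarify
    fix \<alpha>
    assume "\<alpha> \<in> finite_roots Q K"
    then obtain a where a: "\<alpha> = ns_cls a" "Q a a = -2" "Q a K = 0"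
      by (rule finite_rootE)
    then show "refl Q K \<alpha> \<in> Ogroup Q K \<and> refl Q K \<alpha> (1, 0, 0) = (1, 0, 0)"
      using lift_ns_in_Ogroup[OF ns_reflection_K_isometry[OF a(2,3)]] unfolding a(1) refl_ns_cls
      by (simp add: ns_reflection_def zero_fun_def[symmetric])
  qed
next
  fix f
  assume "f \<in> {f \<in> Ogroup Q K. f (1, 0, 0) = (1, 0, 0)}"
  moreover have "inj f" if "f \<in> Ogroup Q K"
    using that by (simp add: Ogroup_def bij_is_inj)
  ultimately show "inv f \<in> {f \<in> Ogroup Q K. f (1, 0, 0) = (1, 0, 0)}"
    by (auto intro: Ogroup_inv inv_f_eq)
qed (auto intro: id_in_Ogroup Ogroup_comp)

section \<open>The decomposition of O(Z)\<close>

lemma Ogroup_fixes_point_class: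
  assumes "f \<in> Ogroup Q K"
  shows "f (0, 0, 1) = (0, 0, 1)"
proof -
  have surj: "surj f" and euler: "\<And>x y. euler Q K (f x) (f y) = euler Q K x y"
    and rk: "\<And>x. fst (f x) = fst x"
    using assms by (auto simp: Ogroup_def rk_def bij_is_surj)
  obtain u w where image: "f (0, 0, 1) = (0, u, w)"
    using rk[of "(0, 0, 1)"] by (cases "f (0, 0, 1)") auto
  have pairing: "euler Q K (f x) (0, u, w) = fst x" for x
    using euler[of x "(0, 0, 1)"] image by (cases x) simp
  obtain x where "f x = (1, 0, 0)"
    using surj by (metis surjD)
  with pairing[of x] rk[of x] have "w = 1"
    by simp
  moreover have "u = 0"
  proof (rule Q_nondegenerate)
    fix k
    obtain x where "f x = (0, basis_vec k, 0)"
      using surj by (metis surjD)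
    with pairing[of x] rk[of x] show "Q u (basis_vec k) = Q 0 (basis_vec k)"
      using Q_sym[of u] by simp
  qed
  ultimately show ?thesis
    using image by simp
qed

lemma ns_part_K_isometry:
  assumes "f \<in> Ogroup Q K"
  shows "K_isometry Q K (ns_part f)"
proof -
  have surj: "surj f" and additive: "additive_map f"
    and euler: "\<And>x y. euler Q K (f x) (f y) = euler Q K x y"
    and rk: "\<And>x. fst (f x) = fst x" and degK: "\<And>x. degK Q K (f x) = degK Q K x"
    using assms by (auto simp: Ogroup_def rk_def bij_is_surj)
  define lam where "lam c = snd (snd (f (0, c, 0)))" for c
  have image: "f (0, c, 0) = (0, ns_part f c, lam c)" for c
    using rk[of "(0, c, 0)"] unfolding ns_part_def lam_def by (cases "f (0, c, 0)") auto
  have "Q (ns_part f x) (ns_part f y) = Q x y" for x y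
    using euler[of "(0, x, 0)" "(0, y, 0)"] image[of x] image[of y] by simp
  then have "isometry Q (ns_part f)"
    unfolding isometry_def by blast
  moreover have "surj (ns_part f)"
    unfolding surj_def
  proof
    fix c'
    obtain r c s where "f (r, c, s) = (0, c', 0)"
      using surj by (metis surjD prod_cases3)
    moreover from this have "r = 0"
      using rk[of "(r, c, s)"] by simp
    moreover have "kscale 0 y = 0" for y :: "'n Kcls"
      by (simp add: kscale_def zero_prod_def zero_fun_def)
    ultimately have "f (0, c, 0) + kscale s (0, 0, 1) = (0, c', 0)"
      using additive_map_apply[OF additive, of 0 c s] Ogroup_fixes_point_class[OF assms] by simp
    then show "\<exists>c. c' = ns_part f c"
      using image[of c] by (auto simp: kscale_def zero_fun_def[symmetric])
  qed
  moreover have "Q (ns_part f c) K = Q c K" for c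
    using degK[of "(0, c, 0)"] image[of c] by (simp add: degK_def)
  ultimately show ?thesis
    unfolding K_isometry_def using isometry_fixes_K by blast
qed

lemma Ogroup_eq_twist_comp_lift:
  assumes "f \<in> Ogroup Q K"
  defines "l \<equiv> fst (snd (f (1, 0, 0)))"
  shows "Q l K = 0" and "f = twist Q K l \<circ> lift_ns (ns_part f)"
proof -
  have additive: "additive_map f"
    and euler: "\<And>x y. euler Q K (f x) (f y) = euler Q K x y"
    and rk: "\<And>x. fst (f x) = fst x" and degK: "\<And>x. degK Q K (f x) = degK Q K x"
    using assms by (auto simp: Ogroup_def rk_def)
  obtain t where one: "f (1, 0, 0) = (1, l, t)"
    using rk[of "(1, 0, 0)"] unfolding l_def by (cases "f (1, 0, 0)") auto
  define lam where "lam c = snd (snd (f (0, c, 0)))" for c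
  have image: "f (0, c, 0) = (0, ns_part f c, lam c)" for c
    using rk[of "(0, c, 0)"] unfolding ns_part_def lam_def by (cases "f (0, c, 0)") auto
  show "Q l K = 0"
    using degK[of "(1, 0, 0)"] one by (simp add: degK_def)
  have "(Q l l - Q l K) div 2 = t"
    using euler[of "(1, 0, 0)" "(1, 0, 0)"] one by simp
  moreover have "lam c = Q (ns_part f c) l" for c
    using euler[of "(1, 0, 0)" "(0, c, 0)"] one image[of c] Q_sym[of l] by simp
  ultimately have "f (r, c, s) = twist Q K l (r, ns_part f c, s)" for r c s
    using additive_map_apply[OF additive, of r c s] one image[of c] Ogroup_fixes_point_class[OF assms(1)]
    by (simp add: kscale_def plus_fun_def algebra_simps)
  then show "f = twist Q K l \<circ> lift_ns (ns_part f)"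
    by (auto simp: fun_eq_iff)
qed

lemma Ogroup_decomposition:
  assumes "f \<in> Ogroup Q K"
  obtains l h where "Q l K = 0" "K_isometry Q K h" "f = twist Q K l \<circ> lift_ns h"
  using Ogroup_eq_twist_comp_lift[OF assms] ns_part_K_isometry[OF assms] by blast

lemma lift_ns_twist:
  assumes "K_isometry Q K h"
  shows "lift_ns h \<circ> twist Q K l = twist Q K (h l) \<circ> lift_ns h"
proof
  fix x :: "'n Kcls"
  obtain r c s where x: "x = (r, c, s)"
    by (cases x)
  have iso: "Q (h y) (h z) = Q y z" and "surj h" and "h K = K" for y z
    using assms by (auto simp: K_isometry_def isometry_def)
  then have "Q (h l) K = Q l K"
    by metis
  with iso show "(lift_ns h \<circ> twist Q K l) x = (twist Q K (h l) \<circ> lift_ns h) x"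
    using assms isometry_add unfolding K_isometry_def x by simp
qed

lemma Ogroup_eq_gen_group:
  assumes "\<And>h. K_isometry Q K h \<Longrightarrow> lift_ns h \<in> Weyl Q K"
  shows "Ogroup Q K = gen_group (Weyl Q K \<union> Pic0 Q K)"
proof
  show "Ogroup Q K \<subseteq> gen_group (Weyl Q K \<union> Pic0 Q K)"
  proof
    fix f
    assume "f \<in> Ogroup Q K"
    then obtain l h where "Q l K = 0" "K_isometry Q K h" "f = twist Q K l \<circ> lift_ns h"
      by (rule Ogroup_decomposition)
    moreover have "twist Q K l \<in> Pic0 Q K"
      using \<open>Q l K = 0\<close> unfolding Pic0_def by blast
    ultimately show "f \<in> gen_group (Weyl Q K \<union> Pic0 Q K)"
      using assms by (auto intro: gen_group_comp gen_group_generator)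
  qed
  show "gen_group (Weyl Q K \<union> Pic0 Q K) \<subseteq> Ogroup Q K"
    using gen_group_subset_Ogroup Weyl_subset_stabilizer Pic0_subset_Ogroup by blast
qed

lemma Weyl_Int_Pic0: "Weyl Q K \<inter> Pic0 Q K = {id}"
proof
  have "id \<in> Weyl Q K"
    unfolding Weyl_def by (rule gen_group.gen_id)
  moreover have "id \<in> Pic0 Q K"
    unfolding Pic0_def by (intro CollectI exI[of _ 0]) (simp add: twist_zero)
  ultimately show "{id} \<subseteq> Weyl Q K \<inter> Pic0 Q K"
    by blast
  show "Weyl Q K \<inter> Pic0 Q K \<subseteq> {id}"
  proof
    fix p
    assume p: "p \<in> Weyl Q K \<inter> Pic0 Q K"
    then obtain l where l: "p = twist Q K l"
      unfolding Pic0_def by blast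
    have "p (1, 0, 0) = (1, 0, 0)"
      using Weyl_subset_stabilizer p by blast
    then have "l = 0"
      unfolding l by (simp add: fun_eq_iff)
    then show "p \<in> {id}"
      using l twist_zero by simp
  qed
qed

lemma Pic0_normal:
  assumes "f \<in> Ogroup Q K" "p \<in> Pic0 Q K"
  shows "f \<circ> p \<circ> inv f \<in> Pic0 Q K"
proof -
  obtain l where l: "p = twist Q K l" "Q l K = 0"
    using assms(2) unfolding Pic0_def by blast
  obtain m h where mh: "Q m K = 0" "K_isometry Q K h" "f = twist Q K m \<circ> lift_ns h"
    using assms(1) by (rule Ogroup_decomposition)
  have hl: "Q (h l) K = 0"
    using mh(2) l(2) unfolding K_isometry_def isometry_def by metis
  have "f \<circ> p = twist Q K m \<circ> (twist Q K (h l) \<circ> lift_ns h)"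
    unfolding l(1) mh(3) using lift_ns_twist[OF mh(2)] by (simp add: comp_assoc)
  also have "\<dots> = twist Q K (h l) \<circ> f"
    using twist_comp[OF mh(1) hl] twist_comp[OF hl mh(1)] unfolding mh(3)
    by (simp add: comp_assoc[symmetric] add.commute)
  finally have "f \<circ> p \<circ> inv f = twist Q K (h l) \<circ> (f \<circ> inv f)"
    by (simp add: comp_assoc)
  moreover have "bij f"
    using assms(1) by (simp add: Ogroup_def)
  then have "f \<circ> inv f = id"
    by (simp add: bij_is_surj surj_iff[symmetric])
  ultimately show ?thesis
    using hl unfolding Pic0_def by auto
qed

end

section \<open>Inequalities for the blow-up lattice\<close>

lemma square_sum_le_card_mult_sum_squares:
  fixes b :: "'a \<Rightarrow> int"
  shows "(\<Sum>i\<in>I. b i)\<^sup>2 \<le> int (card I) * (\<Sum>i\<in>I. (b i)\<^sup>2)"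
proof -
  have "real_of_int ((\<Sum>i\<in>I. b i)\<^sup>2) \<le> real_of_int (int (card I) * (\<Sum>i\<in>I. (b i)\<^sup>2))"
    using sum_squared_le_sum_of_squares[of "\<lambda>i. real_of_int (b i)" I] by (simp add: mult.commute)
  then show ?thesis by linarith
qed

lemma int_le_square: "(x::int) \<le> x\<^sup>2"
  by (cases "x \<le> 0") (auto simp: power2_eq_square intro: order_trans[OF _ mult_le_cancel_left1[THEN iffD2]])

lemma minus_one_class_degree_nonneg:
  fixes y :: "'a \<Rightarrow> int"
  assumes "card I \<le> 8"
    and self: "d\<^sup>2 - (\<Sum>i\<in>I. (y i)\<^sup>2) = -1" and canonical: "-3 * d - (\<Sum>i\<in>I. y i) = -1"
  shows "d \<ge> 0"
proof (rule ccontr)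
  assume "\<not> d \<ge> 0"
  have squares: "(\<Sum>i\<in>I. (y i)\<^sup>2) = d\<^sup>2 + 1" and sum: "(\<Sum>i\<in>I. y i) = 1 - 3 * d"
    using self canonical by simp_all
  have "int (card I) * (\<Sum>i\<in>I. (y i)\<^sup>2) \<le> 8 * (\<Sum>i\<in>I. (y i)\<^sup>2)"
    using \<open>card I \<le> 8\<close> by (intro mult_right_mono) (auto intro: sum_nonneg)
  with square_sum_le_card_mult_sum_squares[of y I] have "(1 - 3 * d)\<^sup>2 \<le> 8 * (d\<^sup>2 + 1)"
    unfolding squares sum by linarith
  then have "(d + 1) * (d - 7) \<le> 0"
    by (simp add: power2_eq_square algebra_simps)
  with \<open>\<not> d \<ge> 0\<close> have "d = -1"
    by (smt (verit) mult_neg_neg)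
  moreover have "(\<Sum>i\<in>I. y i) \<le> (\<Sum>i\<in>I. (y i)\<^sup>2)"
    by (intro sum_mono int_le_square)
  ultimately show False
    unfolding squares sum by simp
qed

lemma three_largest:
  fixes b :: "'a \<Rightarrow> 'b::linorder"
  assumes "finite I" "card I \<ge> 3"
  obtains i j k where "i \<in> I" "j \<in> I" "k \<in> I" "i \<noteq> j" "i \<noteq> k" "j \<noteq> k"
    "b j \<le> b i" "b k \<le> b j" "\<forall>l \<in> I - {i, j, k}. b l \<le> b k"
proof -
  have largest: "\<exists>i\<in>J. \<forall>l\<in>J. b l \<le> b i" if "J \<subseteq> I" "card J > 0" for J
  proof -
    have "finite J" "J \<noteq> {}"
      using that assms(1) finite_subset by fastforce+
    then have "Max (b ` J) \<in> b ` J"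
      by simp
    then obtain i where "i \<in> J" "b i = Max (b ` J)"
      by auto
    then show ?thesis
      using \<open>finite J\<close> by (intro bexI[of _ i]) auto
  qed
  obtain i where i: "i \<in> I" "\<forall>l\<in>I. b l \<le> b i"
    using largest[of I] assms(2) by auto
  have "card (I - {i}) = card I - 1"
    using i assms by simp
  then obtain j where j: "j \<in> I - {i}" "\<forall>l\<in>I - {i}. b l \<le> b j"
    using largest[of "I - {i}"] assms(2) by auto
  have "card (I - {i, j}) = card I - 2"
    using i j assms by (auto simp: card_Diff_subset)
  then obtain k where "k \<in> I - {i, j}" "\<forall>l\<in>I - {i, j}. b l \<le> b k"
    using largest[of "I - {i, j}"] assms(2) by auto
  with i j show ?thesis
    by (intro that[of i j k]) auto
qed

text \<open>In noether_inequality below, x, y, z are the three largest b i, and P and S the sum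
  and the sum of squares of the remaining ones.\<close>

lemma noether_inequality_arith:
  fixes x y z P S a :: int
  assumes sum: "x + y + z + P = 3 * a - 3" and squares: "x\<^sup>2 + y\<^sup>2 + z\<^sup>2 + S = a\<^sup>2 - 1"
    and "S \<le> z * P" "P \<le> 5 * z" "z \<le> y" "y \<le> x" "0 \<le> z" "2 \<le> a"
  shows "x + y + z > a"
proof (rule ccontr)
  assume "\<not> x + y + z > a"
  define t where "t = x + y + z"
  have "(x - z) * (y - z) \<ge> 0"
    using assms by simp
  then have "x\<^sup>2 + y\<^sup>2 \<le> (t - 2 * z)\<^sup>2 + z\<^sup>2"
    unfolding t_def by (simp add: power2_eq_square algebra_simps)
  with squares \<open>S \<le> z * P\<close> have "a\<^sup>2 - 1 \<le> (t - 2 * z)\<^sup>2 + 2 * z\<^sup>2 + z * P"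
    by linarith
  moreover have "P = 3 * a - 3 - t"
    using sum unfolding t_def by simp
  ultimately have bound: "a\<^sup>2 - 1 \<le> (t - 2 * z)\<^sup>2 + 2 * z\<^sup>2 + z * (3 * a - 3 - t)"
    by simp
  show False
  proof (cases "z = 0")
    case True
    then show ?thesis
      using assms \<open>\<not> x + y + z > a\<close> by simp
  next
    case False
    have "t \<le> a" "3 * z \<le> t" "1 \<le> z"
      using assms \<open>\<not> x + y + z > a\<close> False unfolding t_def by auto
    then have "(a - t) * (a + t - 5 * z) \<ge> 0" "z * (2 * a - 6 * z) \<ge> 0"
      by (auto intro!: mult_nonneg_nonneg)
    moreover have "(a - t) * (a + t - 5 * z) = a\<^sup>2 - t\<^sup>2 - 5 * (a * z) + 5 * (t * z)"
      and "z * (2 * a - 6 * z) = 2 * (a * z) - 6 * z\<^sup>2"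
      and "(t - 2 * z)\<^sup>2 + 2 * z\<^sup>2 + z * (3 * a - 3 - t) = t\<^sup>2 - 5 * (t * z) + 6 * z\<^sup>2 + 3 * (a * z) - 3 * z"
      by (simp_all add: power2_eq_square algebra_simps)
    ultimately show False
      using bound \<open>1 \<le> z\<close> by linarith
  qed
qed

lemma noether_inequality:
  fixes b :: "'a \<Rightarrow> int"
  assumes "finite I" "card I \<le> 8" "\<forall>i\<in>I. b i \<ge> 0"
    and sum: "(\<Sum>i\<in>I. b i) = 3 * a - 3" and squares: "(\<Sum>i\<in>I. (b i)\<^sup>2) = a\<^sup>2 - 1" and "a \<ge> 2"
  shows "\<exists>i\<in>I. \<exists>j\<in>I. \<exists>k\<in>I. i \<noteq> j \<and> i \<noteq> k \<and> j \<noteq> k \<and> b i + b j + b k > a"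
proof -
  have "card I \<ge> 3"
  proof (rule ccontr)
    assume "\<not> card I \<ge> 3"
    then have "int (card I) * (\<Sum>i\<in>I. (b i)\<^sup>2) \<le> 2 * (\<Sum>i\<in>I. (b i)\<^sup>2)"
      by (intro mult_right_mono) (auto intro: sum_nonneg)
    with square_sum_le_card_mult_sum_squares[of b I] have "(3 * a - 3)\<^sup>2 \<le> 2 * (a\<^sup>2 - 1)"
      unfolding sum squares by linarith
    then have "(a - 1) * (7 * a - 11) \<le> 0"
      by (simp add: power2_eq_square algebra_simps)
    moreover have "(a - 1) * (7 * a - 11) > 0"
      using \<open>a \<ge> 2\<close> by (intro mult_pos_pos) auto
    ultimately show False
      by simp
  qed
  then obtain i j k where ijk: "i \<in> I" "j \<in> I" "k \<in> I" "i \<noteq> j" "i \<noteq> k" "j \<noteq> k"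
    "b j \<le> b i" "b k \<le> b j" and rest: "\<forall>l \<in> I - {i, j, k}. b l \<le> b k"
    using three_largest[OF \<open>finite I\<close>] by metis
  define R where "R = I - {i, j, k}"
  have split: "(\<Sum>l\<in>I. f l) = f i + f j + f k + (\<Sum>l\<in>R. f l)" for f :: "'a \<Rightarrow> int"
  proof -
    have "I = insert i (insert j (insert k R))" "finite R"
      using ijk \<open>finite I\<close> unfolding R_def by auto
    moreover have "i \<notin> insert j (insert k R)" "j \<notin> insert k R" "k \<notin> R"
      using ijk unfolding R_def by auto
    ultimately show ?thesis
      by (simp add: algebra_simps)
  qed
  have "card R = card I - 3"
    using ijk \<open>finite I\<close> unfolding R_def by (auto simp: card_Diff_subset)
  have "(\<Sum>l\<in>R. b l) \<le> of_nat (card R) * b k"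
    using rest unfolding R_def by (intro sum_bounded_above) auto
  also have "\<dots> \<le> 5 * b k"
    using \<open>card R = card I - 3\<close> \<open>card I \<le> 8\<close> assms(3) ijk(3) by (intro mult_right_mono) auto
  finally have "(\<Sum>l\<in>R. b l) \<le> 5 * b k" .
  moreover have "(\<Sum>l\<in>R. (b l)\<^sup>2) \<le> b k * (\<Sum>l\<in>R. b l)"
    unfolding sum_distrib_left power2_eq_square
    using rest assms(3) by (intro sum_mono mult_right_mono) (auto simp: R_def)
  ultimately have "b i + b j + b k > a"
    using sum squares ijk assms(3) \<open>a \<ge> 2\<close> unfolding split[of b] split[of "\<lambda>l. (b l)\<^sup>2"]
    by (intro noether_inequality_arith[where P = "\<Sum>l\<in>R. b l" and S = "\<Sum>l\<in>R. (b l)\<^sup>2"]) auto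
  with ijk show ?thesis
    by blast
qed

lemma unit_vector_of_sums:
  fixes z :: "'a \<Rightarrow> int"
  assumes "finite J" and sum: "(\<Sum>j\<in>J. z j) = 1" and squares: "(\<Sum>j\<in>J. (z j)\<^sup>2) = 1"
  shows "\<exists>j\<in>J. z j = 1 \<and> (\<forall>i\<in>J. i \<noteq> j \<longrightarrow> z i = 0)"
proof -
  have "(\<Sum>j\<in>J. (z j)\<^sup>2 - z j) = 0"
    using sum squares by (simp add: sum_subtractf)
  then have "\<forall>j\<in>J. (z j)\<^sup>2 - z j = 0"
    using int_le_square \<open>finite J\<close> by (subst (asm) sum_nonneg_eq_0_iff) auto
  then have binary: "\<forall>j\<in>J. z j = 0 \<or> z j = 1"
    by (auto simp: power2_eq_square algebra_simps)
  then have "(\<Sum>j\<in>J. (z j)\<^sup>2) = (\<Sum>j\<in>J. z j)"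
    by (intro sum.cong) auto
  obtain j where j: "j \<in> J" "z j = 1"
    using binary sum by (metis (no_types, lifting) sum.neutral zero_neq_one)
  have "(\<Sum>i\<in>J - {j}. z i) = 0"
    using sum j \<open>finite J\<close> by (simp add: sum.remove)
  then have "\<forall>i\<in>J - {j}. z i = 0"
    using binary \<open>finite J\<close> by (subst (asm) sum_nonneg_eq_0_iff) auto
  with j show ?thesis
    by blast
qed

section \<open>Blow-ups of the projective plane\<close>

text \<open>P^2 blown up in n points: E 0 is the class of a line, E 1, ..., E n are the exceptional
  curves.\<close>

locale blowup_lattice =
  fixes Q :: "'n ns_form" and K :: "'n \<Rightarrow> int"
    and e :: "nat \<Rightarrow> 'n" and n :: nat
  assumes e_bij: "bij_betw e {..n} UNIV"
    and at_most_eight: "n \<le> 8"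
    and Q_eq: "Q x y = x (e 0) * y (e 0) - (\<Sum>i=1..n. x (e i) * y (e i))"
    and K_line: "K (e 0) = -3"
    and K_exceptional: "i \<in> {1..n} \<Longrightarrow> K (e i) = 1"
begin

abbreviation E :: "nat \<Rightarrow> 'n \<Rightarrow> int" where
  "E i \<equiv> basis_vec (e i)"

lemma e_inj: "i \<le> n \<Longrightarrow> j \<le> n \<Longrightarrow> e i = e j \<Longrightarrow> i = j"
  using e_bij unfolding bij_betw_def inj_on_def by auto

lemma e_surj:
  obtains i where "i \<le> n" "e i = k"
  using e_bij unfolding bij_betw_def by (metis UNIV_I atMost_iff imageE)

lemma coordinates_ext: "(\<And>i. i \<le> n \<Longrightarrow> u (e i) = v (e i)) \<Longrightarrow> u = v"
  by (metis e_surj ext)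

lemma E_apply: "i \<le> n \<Longrightarrow> j \<le> n \<Longrightarrow> E i (e j) = (if i = j then 1 else 0)"
  using e_inj by (auto simp: basis_vec_def)

lemma Q_E_line: "Q x (E 0) = x (e 0)"
proof -
  have "(\<Sum>i=1..n. x (e i) * E 0 (e i)) = 0"
    using E_apply by (intro sum.neutral) auto
  then show ?thesis
    unfolding Q_eq by (simp add: basis_vec_def)
qed

lemma Q_E_exceptional:
  assumes "j \<in> {1..n}"
  shows "Q x (E j) = - x (e j)"
proof -
  have "(\<Sum>i=1..n. x (e i) * E j (e i)) = (\<Sum>i=1..n. if i = j then x (e j) else 0)"
    using assms E_apply by (intro sum.cong) auto
  also have "\<dots> = x (e j)"
    using assms by simp
  finally show ?thesis
    unfolding Q_eq using assms E_apply[of j 0] by simp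
qed

lemma canonical_lattice: "canonical_lattice Q K"
proof (rule canonical_lattice.intro)
  show "Q x y = Q y x" for x y
    unfolding Q_eq by (simp add: mult.commute)
  show "Q (\<lambda>k. p * x k + q * y k) z = p * Q x z + q * Q y z" for p q x y z
    unfolding Q_eq by (simp add: algebra_simps sum.distrib sum_distrib_left)
  show "u = v" if "\<And>k. Q u (basis_vec k) = Q v (basis_vec k)" for u v
  proof (rule coordinates_ext)
    fix i
    assume "i \<le> n"
    then show "u (e i) = v (e i)"
      using that[of "e i"] Q_E_line Q_E_exceptional[of i] by (cases "i = 0") auto
  qed
  show "even (Q l l - Q l K)" for l
  proof -
    have "Q l l - Q l K = l (e 0) * (l (e 0) + 3) - (\<Sum>i=1..n. l (e i) * (l (e i) - 1))"
      unfolding Q_eq K_line by (simp add: K_exceptional sum_subtractf algebra_simps)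
    then show ?thesis
      by (simp add: dvd_sum)
  qed
qed

sublocale canonical_lattice Q K
  by (rule canonical_lattice)

lemma Q_E_line_left: "Q (E 0) x = x (e 0)"
  using Q_E_line Q_sym by simp

lemma Q_E_exceptional_left: "j \<in> {1..n} \<Longrightarrow> Q (E j) x = - x (e j)"
  using Q_E_exceptional Q_sym by simp

lemma Q_K_eq: "Q y K = - 3 * y (e 0) - (\<Sum>j=1..n. y (e j))"
  unfolding Q_eq K_line by (simp add: K_exceptional)

lemma Q_self_eq: "Q y y = (y (e 0))\<^sup>2 - (\<Sum>j=1..n. (y (e j))\<^sup>2)"
  unfolding Q_eq by (simp add: power2_eq_square)

lemma E_eq_iff: "i \<le> n \<Longrightarrow> j \<le> n \<Longrightarrow> E i = E j \<longleftrightarrow> i = j"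
  using E_apply[of i i] E_apply[of j i] by (metis one_neq_zero)

lemma K_isometry_permutes_exceptional:
  assumes "K_isometry Q K g" "g (E 0) = E 0" "i \<in> {1..n}"
  obtains j where "j \<in> {1..n}" "g (E i) = E j"
proof -
  define y where "y = g (E i)"
  have iso: "Q (g u) (g v) = Q u v" and "g K = K" for u v
    using assms(1) by (auto simp: K_isometry_def isometry_def)
  have "y (e 0) = Q (E i) (E 0)"
    unfolding y_def using iso[of "E i" "E 0"] assms(2) by (simp add: Q_E_line)
  then have y0: "y (e 0) = 0"
    using assms(3) by (simp add: Q_E_line E_apply)
  have "Q y y = Q (E i) (E i)" "Q y K = Q (E i) K"
    unfolding y_def using iso[of "E i"] \<open>g K = K\<close> by metis+
  then have "Q y y = -1" "Q y K = -1"
    using assms(3) by (simp_all add: Q_E_exceptional_left E_apply K_exceptional)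
  then have "(\<Sum>m=1..n. (y (e m))\<^sup>2) = 1" "(\<Sum>m=1..n. y (e m)) = 1"
    unfolding Q_self_eq Q_K_eq y0 by simp_all
  then obtain j where j: "j \<in> {1..n}" "y (e j) = 1" "\<forall>m\<in>{1..n}. m \<noteq> j \<longrightarrow> y (e m) = 0"
    using unit_vector_of_sums[of "{1..n}" "\<lambda>m. y (e m)"] by auto
  have "y = E j"
  proof (rule coordinates_ext)
    fix m
    assume "m \<le> n"
    then show "y (e m) = E j (e m)"
      using j y0 E_apply[of j m] by (cases "m = 0") auto
  qed
  with j show ?thesis
    using that unfolding y_def by blast
qed

lemma transposition_root:
  assumes "i \<in> {1..n}" "j \<in> {1..n}" "i \<noteq> j"
  shows "Q (E i - E j) (E i - E j) = -2" "Q (E i - E j) K = 0"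
    and "m \<le> n \<Longrightarrow> ns_reflection Q (E i - E j) (E m) = E (if m = i then j else if m = j then i else m)"
proof -
  have Q_root: "Q (E i - E j) x = x (e j) - x (e i)" for x
    using assms by (simp add: Q_diff_left Q_E_exceptional_left)
  show "Q (E i - E j) (E i - E j) = -2" "Q (E i - E j) K = 0"
    using assms by (simp_all add: Q_root E_apply K_exceptional)
  assume "m \<le> n"
  then have "Q (E m) (E i - E j) = (if m = j then 1 else 0) - (if m = i then 1 else 0)"
    using assms Q_root[of "E m"] Q_sym[of "E m"] by (simp add: E_apply)
  then show "ns_reflection Q (E i - E j) (E m) = E (if m = i then j else if m = j then i else m)"
    using assms by (auto simp: ns_reflection_def fun_eq_iff)
qed

definition moved :: "'n ns_map \<Rightarrow> nat set" where
  "moved g = {m \<in> {1..n}. g (E m) \<noteq> E m}"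

lemma K_isometry_eq_id_if_unmoved:
  assumes "K_isometry Q K g" "g (E 0) = E 0" "moved g = {}"
  shows "g = id"
proof -
  have "g (basis_vec k) = basis_vec k" for k
  proof -
    obtain i where "i \<le> n" "e i = k"
      by (rule e_surj)
    then show ?thesis
      using assms(2,3) unfolding moved_def by (cases "i = 0") auto
  qed
  then show ?thesis
    using isometry_eq_id assms(1) unfolding K_isometry_def by blast
qed

lemma transposition_shrinks_moved:
  assumes g: "K_isometry Q K g" "g (E 0) = E 0" and "i \<in> moved g"
  obtains a where "Q a a = -2" "Q a K = 0" "(ns_reflection Q a \<circ> g) (E 0) = E 0"
    "moved (ns_reflection Q a \<circ> g) \<subset> moved g"
proof -
  have i: "i \<in> {1..n}" "g (E i) \<noteq> E i"
    using \<open>i \<in> moved g\<close> unfolding moved_def by auto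
  obtain j where j: "j \<in> {1..n}" "g (E i) = E j"
    using K_isometry_permutes_exceptional[OF g i(1)] .
  have "i \<noteq> j"
    using i j by auto
  note root = transposition_root[OF i(1) j(1) \<open>i \<noteq> j\<close>]
  have "(ns_reflection Q (E i - E j) \<circ> g) (E m) = E m" if "m \<in> {1..n}" "g (E m) = E m" for m
  proof -
    have "m \<noteq> j"
    proof
      assume "m = j"
      then have "g (E m) = g (E i)"
        using that(2) j(2) by simp
      then have "m = i"
        using injD[OF isometry_inj] g(1) E_eq_iff that(1) i(1)
        unfolding K_isometry_def by (metis atLeastAtMost_iff)
      then show False
        using that(2) i(2) by simp
    qed
    then show ?thesis
      using that i root(3)[of m] by auto
  qed
  moreover have "(ns_reflection Q (E i - E j) \<circ> g) (E i) = E i"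
    using j root(3)[of j] by simp
  ultimately have "moved (ns_reflection Q (E i - E j) \<circ> g) \<subset> moved g"
    using \<open>i \<in> moved g\<close> unfolding moved_def by blast
  moreover have "(ns_reflection Q (E i - E j) \<circ> g) (E 0) = E 0"
    using g(2) root(3)[of 0] i j by simp
  ultimately show ?thesis
    using that root(1,2) by blast
qed

lemma K_isometry_fixing_line_in_Weyl:
  assumes "K_isometry Q K g" "g (E 0) = E 0"
  shows "lift_ns g \<in> Weyl Q K"
  using assms
proof (induction "card (moved g)" arbitrary: g rule: less_induct)
  case less
  show ?case
  proof (cases "moved g = {}")
    case True
    then have "g = id"
      using K_isometry_eq_id_if_unmoved less.prems by blast
    then show ?thesis
      unfolding Weyl_def by (simp add: gen_group.gen_id)
  next
    case False
    then obtain a where root: "Q a a = -2" "Q a K = 0"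
      and "(ns_reflection Q a \<circ> g) (E 0) = E 0" "moved (ns_reflection Q a \<circ> g) \<subset> moved g"
      using transposition_shrinks_moved[OF less.prems] by blast
    moreover have "K_isometry Q K (ns_reflection Q a \<circ> g)"
      using root less.prems(1) by (intro K_isometry_comp ns_reflection_K_isometry)
    moreover have "finite (moved g)"
      unfolding moved_def by simp
    ultimately have "lift_ns (ns_reflection Q a \<circ> g) \<in> Weyl Q K"
      using less.hyps psubset_card_mono by blast
    then show ?thesis
      using lift_ns_in_Weyl_if_reflected root by blast
  qed
qed

lemma line_image_exceptional_coord_nonpos:
  assumes "K_isometry Q K g" "i \<in> {1..n}"
  shows "g (E 0) (e i) \<le> 0"
proof -
  have iso: "Q (g u) (g v) = Q u v" and "surj g" "g K = K" for u v
    using assms(1) by (auto simp: K_isometry_def isometry_def)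
  then obtain y where y: "g y = E i"
    by (metis surjD)
  have "- g (E 0) (e i) = y (e 0)"
    using iso[of "E 0" y] assms(2) by (simp add: y Q_E_exceptional Q_E_line_left)
  moreover have "Q y y = Q (E i) (E i)" "Q y K = Q (E i) K"
    using iso[of y] \<open>g K = K\<close> y by metis+
  then have "Q y y = -1" "Q y K = -1"
    using assms(2) by (simp_all add: Q_E_exceptional_left E_apply K_exceptional)
  then have "y (e 0) \<ge> 0"
    using minus_one_class_degree_nonneg[of "{1..n}" "y (e 0)" "\<lambda>j. y (e j)"] at_most_eight
    unfolding Q_self_eq Q_K_eq by simp
  ultimately show ?thesis
    by simp
qed

lemma noether_root:
  assumes "i \<in> {1..n}" "j \<in> {1..n}" "k \<in> {1..n}" "i \<noteq> j" "i \<noteq> k" "j \<noteq> k"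
  defines "a \<equiv> E 0 - E i - E j - E k"
  shows "Q x a = x (e 0) + x (e i) + x (e j) + x (e k)" "a (e 0) = 1" "Q a a = -2" "Q a K = 0"
proof -
  show Q_root: "Q x a = x (e 0) + x (e i) + x (e j) + x (e k)" for x
    unfolding a_def Q_sym[of x] using assms(1-3)
    by (simp add: Q_diff_left Q_E_line_left Q_E_exceptional_left)
  show "a (e 0) = 1"
    unfolding a_def using assms(1-3) by (simp add: E_apply)
  then show "Q a a = -2"
    unfolding Q_root using assms by (simp add: a_def E_apply)
  show "Q a K = 0"
    unfolding Q_sym[of a] Q_root using assms(1-3) by (simp add: K_line K_exceptional)
qed

lemma line_image_multiplicities:
  assumes "K_isometry Q K g"
  defines "d \<equiv> g (E 0) (e 0)" and "b \<equiv> \<lambda>j. - g (E 0) (e j)"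
  shows "\<forall>j\<in>{1..n}. b j \<ge> 0" "(\<Sum>j=1..n. b j) = 3 * d - 3" "(\<Sum>j=1..n. (b j)\<^sup>2) = d\<^sup>2 - 1" "d \<ge> 1"
proof -
  show b_nonneg: "\<forall>j\<in>{1..n}. b j \<ge> 0"
    unfolding b_def using line_image_exceptional_coord_nonpos[OF assms(1)] by simp
  have "Q (g (E 0)) (g (E 0)) = Q (E 0) (E 0)" "Q (g (E 0)) K = Q (E 0) K"
    using assms(1) unfolding K_isometry_def isometry_def by metis+
  then show "(\<Sum>j=1..n. b j) = 3 * d - 3" "(\<Sum>j=1..n. (b j)\<^sup>2) = d\<^sup>2 - 1"
    unfolding Q_self_eq Q_K_eq b_def d_def by (simp_all add: E_apply K_line sum_negf)
  with b_nonneg show "d \<ge> 1"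
    using sum_nonneg[of "{1..n}" b] by auto
qed

lemma line_image_degree_one:
  assumes "K_isometry Q K g" "g (E 0) (e 0) = 1"
  shows "g (E 0) = E 0"
proof (rule coordinates_ext)
  fix m
  assume "m \<le> n"
  have "(\<Sum>j=1..n. - g (E 0) (e j)) = 0"
    using line_image_multiplicities(2)[OF assms(1)] assms(2) by simp
  then have "\<forall>j\<in>{1..n}. g (E 0) (e j) = 0"
    using sum_nonneg_eq_0_iff[of "{1..n}" "\<lambda>j. - g (E 0) (e j)"] line_image_multiplicities(1)[OF assms(1)]
    by simp
  with \<open>m \<le> n\<close> show "g (E 0) (e m) = E 0 (e m)"
    using assms(2) E_apply[of 0 m] by (cases "m = 0") auto
qed

lemma noether_reflection_lowers_degree:
  assumes "K_isometry Q K g" "g (E 0) (e 0) \<noteq> 1"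
  obtains a where "Q a a = -2" "Q a K = 0" "(ns_reflection Q a \<circ> g) (E 0) (e 0) < g (E 0) (e 0)"
proof -
  define d where "d = g (E 0) (e 0)"
  define b where "b j = - g (E 0) (e j)" for j
  have "\<forall>j\<in>{1..n}. b j \<ge> 0" "(\<Sum>j=1..n. b j) = 3 * d - 3" "(\<Sum>j=1..n. (b j)\<^sup>2) = d\<^sup>2 - 1" "d \<ge> 2"
    using line_image_multiplicities[OF assms(1)] assms(2) unfolding b_def d_def by auto
  then obtain i j k where ijk: "i \<in> {1..n}" "j \<in> {1..n}" "k \<in> {1..n}" "i \<noteq> j" "i \<noteq> k" "j \<noteq> k"
    and "b i + b j + b k > d"
    using noether_inequality[of "{1..n}" b d] at_most_eight by auto
  note root = noether_root[OF ijk]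
  have "(ns_reflection Q (E 0 - E i - E j - E k) \<circ> g) (E 0) (e 0) = 2 * d - (b i + b j + b k)"
    using root(1,2) by (simp add: ns_reflection_def d_def b_def)
  with \<open>b i + b j + b k > d\<close> show ?thesis
    using that root(3,4) unfolding d_def by simp
qed

lemma K_isometry_in_Weyl:
  assumes "K_isometry Q K g"
  shows "lift_ns g \<in> Weyl Q K"
  using assms
proof (induction "nat (g (E 0) (e 0))" arbitrary: g rule: less_induct)
  case less
  show ?case
  proof (cases "g (E 0) (e 0) = 1")
    case True
    then show ?thesis
      using K_isometry_fixing_line_in_Weyl line_image_degree_one less.prems by blast
  next
    case False
    then obtain a where root: "Q a a = -2" "Q a K = 0"
      and lower: "(ns_reflection Q a \<circ> g) (E 0) (e 0) < g (E 0) (e 0)"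
      using noether_reflection_lowers_degree less.prems by blast
    have "K_isometry Q K (ns_reflection Q a \<circ> g)"
      using root less.prems by (intro K_isometry_comp ns_reflection_K_isometry)
    moreover have "nat ((ns_reflection Q a \<circ> g) (E 0) (e 0)) < nat (g (E 0) (e 0))"
      using lower line_image_multiplicities(4)[OF less.prems] by simp
    ultimately have "lift_ns (ns_reflection Q a \<circ> g) \<in> Weyl Q K"
      using less.hyps by blast
    then show ?thesis
      using lift_ns_in_Weyl_if_reflected root by blast
  qed
qed

end

section \<open>The quadric\<close>

text \<open>P^1 x P^1: the two basis vectors are the classes of the rulings.\<close>

locale quadric_lattice =
  fixes Q :: "'n ns_form" and K :: "'n \<Rightarrow> int" and p q :: 'n
  assumes distinct: "p \<noteq> q" and exhaustive: "k = p \<or> k = q"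
    and Q_eq: "Q x y = x p * y q + x q * y p"
    and K_p: "K p = -2" and K_q: "K q = -2"
begin

lemma coordinates_ext: "u p = v p \<Longrightarrow> u q = v q \<Longrightarrow> u = v"
  using exhaustive by (intro ext) metis

lemma basis_vec_apply: "basis_vec p p = 1" "basis_vec p q = 0" "basis_vec q p = 0" "basis_vec q q = 1"
  using distinct by (auto simp: basis_vec_def)

lemma canonical_lattice: "canonical_lattice Q K"
proof (rule canonical_lattice.intro)
  show "Q x y = Q y x" for x y
    unfolding Q_eq by simp
  show "Q (\<lambda>k. a * x k + b * y k) z = a * Q x z + b * Q y z" for a b x y z
    unfolding Q_eq by (simp add: algebra_simps)
  show "u = v" if "\<And>k. Q u (basis_vec k) = Q v (basis_vec k)" for u v
    using that[of p] that[of q] unfolding Q_eq by (intro coordinates_ext) (simp_all add: basis_vec_apply)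
  show "even (Q l l - Q l K)" for l
    unfolding Q_eq K_p K_q by simp
qed

sublocale canonical_lattice Q K
  by (rule canonical_lattice)

lemma ruling_classes:
  assumes "Q x x = 0" "Q x K = -2"
  shows "x = basis_vec p \<or> x = basis_vec q"
proof -
  have "x p * x q = 0" "x p + x q = 1"
    using assms unfolding Q_eq K_p K_q by simp_all
  then have "(x p = 1 \<and> x q = 0) \<or> (x p = 0 \<and> x q = 1)"
    by auto
  then show ?thesis
    using coordinates_ext basis_vec_apply by metis
qed

lemma Q_rulings:
  "Q (basis_vec p) (basis_vec p) = 0" "Q (basis_vec q) (basis_vec q) = 0" "Q (basis_vec p) (basis_vec q) = 1"
  "Q (basis_vec p) K = -2" "Q (basis_vec q) K = -2"
  unfolding Q_eq by (simp_all add: basis_vec_apply K_p K_q)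

lemma K_isometry_fixes_or_swaps_rulings:
  assumes "K_isometry Q K g"
  shows "g (basis_vec p) = basis_vec p \<and> g (basis_vec q) = basis_vec q
    \<or> g (basis_vec p) = basis_vec q \<and> g (basis_vec q) = basis_vec p"
proof -
  have iso: "Q (g u) (g v) = Q u v" and "g K = K" for u v
    using assms by (auto simp: K_isometry_def isometry_def)
  have "g (basis_vec p) = basis_vec p \<or> g (basis_vec p) = basis_vec q"
    "g (basis_vec q) = basis_vec p \<or> g (basis_vec q) = basis_vec q"
    using Q_rulings iso[of "basis_vec p"] iso[of "basis_vec q"] \<open>g K = K\<close>
    by (metis ruling_classes)+
  moreover have "Q (g (basis_vec p)) (g (basis_vec q)) = 1"
    using Q_rulings iso by simp
  ultimately show ?thesis
    using Q_rulings by fastforce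
qed

lemma K_isometry_in_Weyl:
  assumes "K_isometry Q K g"
  shows "lift_ns g \<in> Weyl Q K"
  using K_isometry_fixes_or_swaps_rulings[OF assms]
proof (elim disjE conjE)
  assume "g (basis_vec p) = basis_vec p" "g (basis_vec q) = basis_vec q"
  then have "g (basis_vec k) = basis_vec k" for k
    using exhaustive[of k] by auto
  then have "g = id"
    using isometry_eq_id assms unfolding K_isometry_def by blast
  then show ?thesis
    unfolding Weyl_def by (simp add: gen_group.gen_id)
next
  assume swap: "g (basis_vec p) = basis_vec q" "g (basis_vec q) = basis_vec p"
  define a where "a = basis_vec p - basis_vec q"
  have root: "Q a a = -2" "Q a K = 0"
    unfolding a_def Q_eq by (simp_all add: basis_vec_apply K_p K_q)
  have "ns_reflection Q a (basis_vec q) = basis_vec p" "ns_reflection Q a (basis_vec p) = basis_vec q"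
    unfolding a_def ns_reflection_def Q_eq by (auto intro!: coordinates_ext simp: basis_vec_apply)
  with swap have "(ns_reflection Q a \<circ> g) (basis_vec k) = basis_vec k" for k
    using exhaustive[of k] by auto
  moreover have "isometry Q (ns_reflection Q a \<circ> g)"
    using K_isometry_comp[OF ns_reflection_K_isometry[OF root] assms] unfolding K_isometry_def by blast
  ultimately have "ns_reflection Q a \<circ> g = id"
    using isometry_eq_id by blast
  then have "lift_ns (ns_reflection Q a \<circ> g) \<in> Weyl Q K"
    unfolding Weyl_def by (simp add: gen_group.gen_id)
  then show ?thesis
    using lift_ns_in_Weyl_if_reflected[OF root] by blast
qed

end

section \<open>Del Pezzo surfaces\<close>

lemma dP_NS_cases:
  fixes Q :: "('n::finite \<Rightarrow> int) \<Rightarrow> ('n \<Rightarrow> int) \<Rightarrow> int" and K :: "'n \<Rightarrow> int"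
  assumes "dP_NS Q K"
  obtains e n where "blowup_lattice Q K e n" | p q where "quadric_lattice Q K p q"
proof -
  define N where "N = card (UNIV :: 'n set)"
  obtain e where e: "bij_betw e {..<N} UNIV" and cases:
    "(N \<le> 9 \<and> (\<forall>x y. Q x y = x (e 0) * y (e 0) - (\<Sum>i\<in>{1..<N}. x (e i) * y (e i))) \<and>
       K (e 0) = -3 \<and> (\<forall>i\<in>{1..<N}. K (e i) = 1))
    \<or> (N = 2 \<and> (\<forall>x y. Q x y = x (e 0) * y (e 1) + x (e 1) * y (e 0)) \<and> K (e 0) = -2 \<and> K (e 1) = -2)"
    using assms unfolding dP_NS_def N_def by blast
  have "N \<ge> 1"
    unfolding N_def by (simp add: Suc_le_eq finite_UNIV_card_ge_0)
  then have "{..<N} = {..N - 1}" "{1..<N} = {1..N - 1}"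
    by auto
  from cases show ?thesis
  proof (elim disjE conjE)
    assume "N \<le> 9" "\<forall>x y. Q x y = x (e 0) * y (e 0) - (\<Sum>i\<in>{1..<N}. x (e i) * y (e i))"
      "K (e 0) = -3" "\<forall>i\<in>{1..<N}. K (e i) = 1"
    then have "blowup_lattice Q K e (N - 1)"
      using e unfolding \<open>{..<N} = {..N - 1}\<close> \<open>{1..<N} = {1..N - 1}\<close> by unfold_locales auto
    then show ?thesis
      by (rule that(1))
  next
    assume "N = 2" "\<forall>x y. Q x y = x (e 0) * y (e 1) + x (e 1) * y (e 0)" "K (e 0) = -2" "K (e 1) = -2"
    moreover have "e 0 \<noteq> e 1" "k = e 0 \<or> k = e 1" for k
      using e \<open>N = 2\<close> unfolding bij_betw_def inj_on_def by (auto simp: lessThan_Suc numeral_2_eq_2)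
    ultimately have "quadric_lattice Q K (e 0) (e 1)"
      by unfold_locales auto
    then show ?thesis
      by (rule that(2))
  qed
qed

lemma dP_NS_canonical_lattice: "dP_NS Q K \<Longrightarrow> canonical_lattice Q K"
  by (erule dP_NS_cases) (auto intro: blowup_lattice.canonical_lattice quadric_lattice.canonical_lattice)

lemma dP_NS_K_isometry_in_Weyl: "dP_NS Q K \<Longrightarrow> K_isometry Q K h \<Longrightarrow> lift_ns h \<in> Weyl Q K"
  by (erule dP_NS_cases) (auto intro: blowup_lattice.K_isometry_in_Weyl quadric_lattice.K_isometry_in_Weyl)

theorem proposition3p10:
  fixes Q :: "('n::finite \<Rightarrow> int) \<Rightarrow> ('n \<Rightarrow> int) \<Rightarrow> int" and K :: "'n \<Rightarrow> int"
  assumes "dP_NS Q K"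
  shows "Ogroup Q K = gen_group (Weyl Q K \<union> Pic0 Q K)
     \<and> Weyl Q K \<inter> Pic0 Q K = {id}
     \<and> (\<forall>g \<in> Ogroup Q K. \<forall>p \<in> Pic0 Q K. g \<circ> p \<circ> inv g \<in> Pic0 Q K)"
proof -
  interpret canonical_lattice Q K
    using assms by (rule dP_NS_canonical_lattice)
  show ?thesis
    using Ogroup_eq_gen_group[OF dP_NS_K_isometry_in_Weyl[OF assms]] Weyl_Int_Pic0 Pic0_normal by blast
qed

end
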